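(* Let $(X,d)$ be a quasi-tree with bottleneck constant $\Delta\geqslant0$ which is $\delta$-hyperbolic, and let $x_0\in X$. Then the end-approximating map $f:X\to T_X$, $f(x)=[x]$, is a $(1,2(\Delta+2\delta))$-quasi-isometry; more precisely, it is surjective and $d(x,y)-2(\Delta+2\delta)\leqslant d^*([x],[y])\leqslant d(x,y)$ for all $x,y\in X$.
   Context: A quasi-tree is a geodesic metric space quasi-isometric to a simplicial tree. $X$ is $\delta$-hyperbolic if every geodesic triangle is $\delta$-slim (each point of a side is within $\delta$ of the union of the other two sides). A bottleneck constant is $\Delta\geqslant0$ such that for every geodesic $[x,y]$ and every $z\in[x,y]$, every path from $x$ to $y$ meets the closed ball $B(z,\Delta)$. End-approximating tree: with $(x,y)_{x_0}=\frac12(d(x_0,x)+d(x_0,y)-d(x,y))$, set $(x,y)'_{x_0}=\sup\min_{1\leqslant i\leqslant n-1}(x_i,x_{i+1})_{x_0}$ over all finite sequences $x=x_1,\ldots,x_n=y$ in $X$, and $d'(x,y)=d(x_0,x)+d(x_0,y)-2(x,y)'_{x_0}$; $T_X=X/\sim$ with $x\sim y$ iff $d'(x,y)=0$, metric $d^*([x],[y])=d'(x,y)$. A $(1,C)$-quasi-isometry $g$ satisfies $d(a,b)-C\leqslant d(g(a),g(b))\leqslant d(a,b)+C$ and has $C$-dense image. *)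

theory Defs
  imports "HOL-Analysis.Analysis"
begin

definition geodesic_seg :: "'a::metric_space set \<Rightarrow> 'a \<Rightarrow> 'a \<Rightarrow> 'a set \<Rightarrow> bool" where
  "geodesic_seg X x y S \<longleftrightarrow>
     (\<exists>\<gamma>::real \<Rightarrow> 'a. \<gamma> 0 = x \<and> \<gamma> (dist x y) = y \<and>
        (\<forall>s\<in>{0..dist x y}. \<forall>t\<in>{0..dist x y}. dist (\<gamma> s) (\<gamma> t) = \<bar>s - t\<bar>) \<and>
        \<gamma> ` {0..dist x y} = S \<and> S \<subseteq> X)"

definition geodesic_space :: "'a::metric_space set \<Rightarrow> bool" where
  "geodesic_space X \<longleftrightarrow> (\<forall>x\<in>X. \<forall>y\<in>X. \<exists>S. geodesic_seg X x y S)"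

definition hyperbolic :: "'a::metric_space set \<Rightarrow> real \<Rightarrow> bool" where
  "hyperbolic X \<delta> \<longleftrightarrow>
     (\<forall>x y z A B C. geodesic_seg X x y A \<and> geodesic_seg X y z B \<and> geodesic_seg X z x C \<longrightarrow>
        (\<forall>p\<in>A. infdist p (B \<union> C) \<le> \<delta>))"

definition bottleneck :: "'a::metric_space set \<Rightarrow> real \<Rightarrow> bool" where
  "bottleneck X \<Delta> \<longleftrightarrow> \<Delta> \<ge> 0 \<and>
     (\<forall>x y S z g. geodesic_seg X x y S \<and> z \<in> S \<and> path g \<and> path_image g \<subseteq> X \<and>
        pathstart g = x \<and> pathfinish g = y \<longrightarrow> path_image g \<inter> cball z \<Delta> \<noteq> {})"

definition is_walk :: "('v \<Rightarrow> 'v \<Rightarrow> bool) \<Rightarrow> 'v list \<Rightarrow> bool" where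
  "is_walk E xs \<longleftrightarrow> xs \<noteq> [] \<and> (\<forall>i. Suc i < length xs \<longrightarrow> E (xs ! i) (xs ! Suc i))"

definition simplicial_tree :: "'v set \<Rightarrow> ('v \<Rightarrow> 'v \<Rightarrow> bool) \<Rightarrow> bool" where
  "simplicial_tree V E \<longleftrightarrow> V \<noteq> {} \<and>
     (\<forall>u v. E u v \<longrightarrow> u \<in> V \<and> v \<in> V \<and> E v u \<and> u \<noteq> v) \<and>
     (\<forall>u\<in>V. \<forall>v\<in>V. \<exists>xs. is_walk E xs \<and> hd xs = u \<and> last xs = v) \<and>
     \<not> (\<exists>xs. is_walk E xs \<and> length xs \<ge> 3 \<and> distinct xs \<and> E (last xs) (hd xs))"

definition tree_dist :: "('v \<Rightarrow> 'v \<Rightarrow> bool) \<Rightarrow> 'v \<Rightarrow> 'v \<Rightarrow> nat" where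
  "tree_dist E u v = (LEAST n. \<exists>xs. is_walk E xs \<and> hd xs = u \<and> last xs = v \<and> length xs = Suc n)"

text \<open>X is quasi-isometric to a simplicial tree (equivalently, to its vertex set
  with the path metric, which is 1/2-dense in the geometric realisation).\<close>
definition quasi_tree :: "'a::metric_space set \<Rightarrow> bool" where
  "quasi_tree X \<longleftrightarrow>
     (\<exists>(V::('a \<times> nat) set) E (q::'a \<Rightarrow> 'a \<times> nat) (L::real) (C::real). simplicial_tree V E \<and> L \<ge> 1 \<and> C \<ge> 0 \<and>
        q ` X \<subseteq> V \<and>
        (\<forall>x\<in>X. \<forall>y\<in>X. dist x y / L - C \<le> real (tree_dist E (q x) (q y)) \<and>
                         real (tree_dist E (q x) (q y)) \<le> L * dist x y + C) \<and>
        (\<forall>v\<in>V. \<exists>x\<in>X. real (tree_dist E (q x) v) \<le> C))"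

definition gromov :: "'a::metric_space \<Rightarrow> 'a \<Rightarrow> 'a \<Rightarrow> real" where
  "gromov x0 x y = (dist x0 x + dist x0 y - dist x y) / 2"

definition chain_gromov :: "'a::metric_space set \<Rightarrow> 'a \<Rightarrow> 'a \<Rightarrow> 'a \<Rightarrow> real" where
  "chain_gromov X x0 x y =
     Sup {Min {gromov x0 (xs ! i) (xs ! Suc i) | i. Suc i < length xs} | xs.
            length xs \<ge> 2 \<and> set xs \<subseteq> X \<and> hd xs = x \<and> last xs = y}"

definition dprime :: "'a::metric_space set \<Rightarrow> 'a \<Rightarrow> 'a \<Rightarrow> 'a \<Rightarrow> real" where
  "dprime X x0 x y = dist x0 x + dist x0 y - 2 * chain_gromov X x0 x y"

definition end_rel :: "'a::metric_space set \<Rightarrow> 'a \<Rightarrow> ('a \<times> 'a) set" where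
  "end_rel X x0 = {(x, y). x \<in> X \<and> y \<in> X \<and> dprime X x0 x y = 0}"

definition TX :: "'a::metric_space set \<Rightarrow> 'a \<Rightarrow> 'a set set" where
  "TX X x0 = X // end_rel X x0"

definition end_map :: "'a::metric_space set \<Rightarrow> 'a \<Rightarrow> 'a \<Rightarrow> 'a set" where
  "end_map X x0 x = end_rel X x0 `` {x}"

definition dstar :: "'a::metric_space set \<Rightarrow> 'a \<Rightarrow> 'a set \<Rightarrow> 'a set \<Rightarrow> real" where
  "dstar X x0 A B = dprime X x0 (SOME x. x \<in> A) (SOME y. y \<in> B)"

end

theory Submission
  imports Defs
begin

text \<open>The trivial chain gives (x|y) \<le> (x|y)', whence d' \<le> d. Conversely, join the consecutive
  points of a chain x = x1, ..., xn = y by geodesics: every point of the resulting path is at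
  distance at least min (xi|xi+1) from the basepoint. By the bottleneck property this path passes
  within \<Delta> of the point of [x,y] which, by \<delta>-slimness of a triangle with vertex the basepoint,
  lies within (x|y) + 2\<delta> of it. Hence (x|y)' \<le> (x|y) + \<Delta> + 2\<delta>. Since (.|.)' is symmetric and
  satisfies the ultrametric inequality, d' is constant on equivalence classes, so d* is well
  defined.\<close>

lemma isometric_curve_continuous_on:
  fixes \<gamma> :: "real \<Rightarrow> 'a::metric_space"
  assumes "\<forall>s\<in>{0..D}. \<forall>t\<in>{0..D}. dist (\<gamma> s) (\<gamma> t) = \<bar>s - t\<bar>"
  shows "continuous_on {0..D} \<gamma>"
  unfolding continuous_on_iff
proof (intro ballI allI impI)
  fix t e assume "t \<in> {0..D}" "(0::real) < e"
  then show "\<exists>d>0. \<forall>s\<in>{0..D}. dist s t < d \<longrightarrow> dist (\<gamma> s) (\<gamma> t) < e"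
    using assms by (intro exI[of _ e]) (auto simp: dist_real_def)
qed

lemma geodesic_segE:
  assumes "geodesic_seg X x y S"
  obtains \<gamma> where "\<gamma> 0 = x" "\<gamma> (dist x y) = y"
    "\<forall>s\<in>{0..dist x y}. \<forall>t\<in>{0..dist x y}. dist (\<gamma> s) (\<gamma> t) = \<bar>s - t\<bar>"
    "\<gamma> ` {0..dist x y} = S" "S \<subseteq> X" "continuous_on {0..dist x y} \<gamma>"
  using assms that isometric_curve_continuous_on unfolding geodesic_seg_def by blast

lemma geodesic_seg_dist_split:
  assumes "geodesic_seg X x y S" "p \<in> S"
  shows "dist x p + dist p y = dist x y"
proof -
  obtain \<gamma> where \<gamma>: "\<gamma> 0 = x" "\<gamma> (dist x y) = y"
    "\<forall>s\<in>{0..dist x y}. \<forall>t\<in>{0..dist x y}. dist (\<gamma> s) (\<gamma> t) = \<bar>s - t\<bar>" "\<gamma> ` {0..dist x y} = S"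
    using assms(1) by (rule geodesic_segE)
  then obtain s where s: "s \<in> {0..dist x y}" "p = \<gamma> s" using assms(2) by blast
  have "dist x p = s" using \<gamma>(1,3) s by (metis atLeastAtMost_iff abs_of_nonneg diff_zero dist_commute order_refl zero_le_dist)
  moreover have "dist p y = dist x y - s" using \<gamma>(2,3) s
    by (metis abs_minus_commute abs_of_nonneg atLeastAtMost_iff diff_ge_0_iff_ge order_refl zero_le_dist)
  ultimately show ?thesis by simp
qed

lemma geodesic_seg_subset: "geodesic_seg X x y S \<Longrightarrow> S \<subseteq> X"
  unfolding geodesic_seg_def by blast

lemma geodesic_seg_endpoints:
  assumes "geodesic_seg X x y S"
  shows "x \<in> S" "y \<in> S"
proof -
  obtain \<gamma> where "\<gamma> 0 = x" "\<gamma> (dist x y) = y" "\<gamma> ` {0..dist x y} = S"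
    using assms by (rule geodesic_segE)
  moreover have "0 \<in> {0..dist x y}" "dist x y \<in> {0..dist x y}" by auto
  ultimately show "x \<in> S" "y \<in> S" by (metis image_eqI)+
qed

lemma geodesic_seg_compact: "geodesic_seg X x y S \<Longrightarrow> compact S"
  by (elim geodesic_segE) (auto intro: compact_continuous_image)

lemma geodesic_seg_path:
  assumes "geodesic_seg X x y S"
  obtains g where "path g" "path_image g = S" "pathstart g = x" "pathfinish g = y"
proof -
  obtain \<gamma> where \<gamma>: "\<gamma> 0 = x" "\<gamma> (dist x y) = y" "\<gamma> ` {0..dist x y} = S"
    "continuous_on {0..dist x y} \<gamma>"
    using assms by (rule geodesic_segE)
  define D where "D = dist x y"
  have "(\<lambda>t. D * t) ` {0..1} = {0..D}"
    using image_mult_atLeastAtMost_if[of D 0 1] by (cases "D = 0") (auto simp: D_def)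
  then have "path_image (\<lambda>t. \<gamma> (D * t)) = S"
    unfolding path_image_def using \<gamma>(3) by (metis D_def image_image)
  moreover have "path (\<lambda>t. \<gamma> (D * t))" unfolding path_def
    by (rule continuous_on_compose2[OF \<gamma>(4)])
      (auto intro!: continuous_intros mult_left_le simp: D_def)
  ultimately show ?thesis
    using \<gamma>(1,2) that by (auto simp: pathstart_def pathfinish_def D_def)
qed

lemma gromov_commute: "gromov x0 x y = gromov x0 y x"
  unfolding gromov_def by (simp add: dist_commute)

lemma gromov_le_dist_left: "gromov x0 x y \<le> dist x0 x"
  using dist_triangle[of x0 y x] unfolding gromov_def by (simp add: dist_commute)

lemma gromov_le_dist_right: "gromov x0 x y \<le> dist x0 y"
  using gromov_le_dist_left[of x0 y x] by (simp add: gromov_commute)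

lemma gromov_le_dist_geodesic_seg:
  assumes "geodesic_seg X x y S" "p \<in> S"
  shows "gromov x0 x y \<le> dist x0 p"
  using geodesic_seg_dist_split[OF assms] dist_triangle[of x0 x p] dist_triangle[of x0 y p]
  unfolding gromov_def by (simp add: dist_commute)

lemma infdist_attained_compact:
  assumes "compact A" "A \<noteq> {}"
  obtains a where "a \<in> A" "infdist p A = dist p a"
proof -
  obtain a where a: "a \<in> A" "\<forall>b\<in>A. dist p a \<le> dist p b"
    using continuous_attains_inf[OF assms continuous_on_dist[OF continuous_on_const continuous_on_id]]
    by blast
  then have "infdist p A = dist p a"
    by (metis antisym cINF_greatest empty_iff infdist_le infdist_notempty)
  with a(1) show ?thesis by (rule that)
qed

text \<open>The point is where the distances to the two other sides agree (intermediate value theorem).\<close>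
lemma slim_triangle_point_close_to_both_sides:
  assumes S: "geodesic_seg X x y S" and "y \<in> B" "x \<in> C"
    and slim: "\<forall>p\<in>S. infdist p (B \<union> C) \<le> \<delta>"
  obtains p where "p \<in> S" "infdist p B \<le> \<delta>" "infdist p C \<le> \<delta>"
proof -
  obtain \<gamma> where \<gamma>: "\<gamma> 0 = x" "\<gamma> (dist x y) = y" "\<gamma> ` {0..dist x y} = S"
    "continuous_on {0..dist x y} \<gamma>"
    using S by (rule geodesic_segE)
  define h where "h t = infdist (\<gamma> t) C - infdist (\<gamma> t) B" for t
  have "continuous_on {0..dist x y} h"
    unfolding h_def by (intro continuous_intros \<gamma>(4))
  moreover have "h 0 \<le> 0" "0 \<le> h (dist x y)"
    using \<gamma>(1,2) assms(2,3) by (simp_all add: h_def infdist_nonneg)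
  ultimately obtain t where t: "0 \<le> t" "t \<le> dist x y" "h t = 0"
    using IVT'[of h 0 0 "dist x y"] by auto
  have "\<gamma> t \<in> S" using \<gamma>(3) t by auto
  moreover have "infdist (\<gamma> t) (B \<union> C) = min (infdist (\<gamma> t) B) (infdist (\<gamma> t) C)"
    using assms(2,3) by (intro infdist_Un_min) auto
  ultimately show ?thesis
    using slim t(3) that[of "\<gamma> t"] by (auto simp: h_def)
qed

lemma slim_triangle_point_near_basepoint:
  assumes S: "geodesic_seg X x y S" and B: "geodesic_seg X y x0 B" and C: "geodesic_seg X x0 x C"
    and slim: "\<forall>p\<in>S. infdist p (B \<union> C) \<le> \<delta>"
  obtains p where "p \<in> S" "dist x0 p \<le> gromov x0 x y + 2 * \<delta>"
proof -
  have "y \<in> B" "x \<in> C" using geodesic_seg_endpoints B C by auto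
  then obtain p where p: "p \<in> S" "infdist p B \<le> \<delta>" "infdist p C \<le> \<delta>"
    using slim_triangle_point_close_to_both_sides[OF S _ _ slim] by blast
  obtain b where b: "b \<in> B" "infdist p B = dist p b"
    using geodesic_seg_compact[OF B] \<open>y \<in> B\<close> by (metis empty_iff infdist_attained_compact)
  obtain a where a: "a \<in> C" "infdist p C = dist p a"
    using geodesic_seg_compact[OF C] \<open>x \<in> C\<close> by (metis empty_iff infdist_attained_compact)
  have "dist x p + dist p y = dist x y" "dist y b + dist b x0 = dist y x0"
    "dist x0 a + dist a x = dist x0 x"
    using geodesic_seg_dist_split S B C p(1) a(1) b(1) by blast+
  moreover have "dist x p \<le> dist x a + dist a p" "dist y p \<le> dist y b + dist b p"
    "dist x0 p \<le> dist x0 a + dist a p" "dist x0 p \<le> dist x0 b + dist b p"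
    by (rule dist_triangle)+
  ultimately have "dist x0 p \<le> gromov x0 x y + 2 * \<delta>"
    using p a b unfolding gromov_def by (simp add: dist_commute field_simps)
  with p(1) show ?thesis by (rule that)
qed

definition chain_min :: "'a::metric_space \<Rightarrow> 'a list \<Rightarrow> real" where
  "chain_min x0 xs = Min {gromov x0 (xs ! i) (xs ! Suc i) | i. Suc i < length xs}"

definition chains :: "'a set \<Rightarrow> 'a \<Rightarrow> 'a \<Rightarrow> 'a list set" where
  "chains X x y = {xs. length xs \<ge> 2 \<and> set xs \<subseteq> X \<and> hd xs = x \<and> last xs = y}"

lemma chain_min_le:
  assumes "Suc i < length xs"
  shows "chain_min x0 xs \<le> gromov x0 (xs ! i) (xs ! Suc i)"
proof -
  have "finite {i. Suc i < length xs}" by (rule finite_subset[of _ "{..<length xs}"]) auto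
  then show ?thesis
    unfolding chain_min_def using assms by (intro Min_le) auto
qed

lemma chain_min_greatest:
  assumes "2 \<le> length xs" "\<And>i. Suc i < length xs \<Longrightarrow> m \<le> gromov x0 (xs ! i) (xs ! Suc i)"
  shows "m \<le> chain_min x0 xs"
proof -
  have "finite {i. Suc i < length xs}" by (rule finite_subset[of _ "{..<length xs}"]) auto
  then show ?thesis
    unfolding chain_min_def using assms by (subst Min_ge_iff) (auto intro: exI[of _ 0])
qed

lemma chain_min_le_dist_hd:
  assumes "2 \<le> length xs"
  shows "chain_min x0 xs \<le> dist x0 (hd xs)"
proof -
  have "chain_min x0 xs \<le> gromov x0 (xs ! 0) (xs ! Suc 0)"
    using assms by (intro chain_min_le) auto
  also have "\<dots> \<le> dist x0 (hd xs)"
    using assms gromov_le_dist_left by (cases xs) auto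
  finally show ?thesis .
qed

lemma chain_min_le_dist_last:
  assumes "2 \<le> length xs"
  shows "chain_min x0 xs \<le> dist x0 (last xs)"
proof -
  have "chain_min x0 xs \<le> gromov x0 (xs ! (length xs - 2)) (xs ! Suc (length xs - 2))"
    using assms by (intro chain_min_le) auto
  also have "Suc (length xs - 2) = length xs - 1" using assms by auto
  also have "xs ! (length xs - 1) = last xs" using assms by (subst last_conv_nth) auto
  finally show ?thesis using gromov_le_dist_right order_trans by blast
qed

lemma chain_min_pair: "chain_min x0 [x, y] = gromov x0 x y"
  using chain_min_le[of 0 "[x, y]" x0] chain_min_greatest[of "[x, y]" "gromov x0 x y" x0]
  by (auto simp: less_Suc_eq)

lemma chain_min_le_rev:
  assumes "2 \<le> length xs"
  shows "chain_min x0 xs \<le> chain_min x0 (rev xs)"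
proof (rule chain_min_greatest)
  show "2 \<le> length (rev xs)" using assms by simp
  fix i assume i: "Suc i < length (rev xs)"
  define n where "n = length xs"
  have "chain_min x0 xs \<le> gromov x0 (xs ! (n - 2 - i)) (xs ! Suc (n - 2 - i))"
    using i by (intro chain_min_le) (auto simp: n_def)
  also have "Suc (n - 2 - i) = n - 1 - i" using i by (auto simp: n_def)
  also have "xs ! (n - 1 - i) = rev xs ! i" using i by (simp add: rev_nth n_def)
  also have "xs ! (n - 2 - i) = rev xs ! Suc i" using i by (simp add: rev_nth n_def)
  finally show "chain_min x0 xs \<le> gromov x0 (rev xs ! i) (rev xs ! Suc i)"
    by (simp add: gromov_commute)
qed

lemma chain_min_rev: "2 \<le> length xs \<Longrightarrow> chain_min x0 (rev xs) = chain_min x0 xs"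
  using chain_min_le_rev[of xs x0] chain_min_le_rev[of "rev xs" x0] by simp

lemma chain_min_append:
  assumes "2 \<le> length xs" "2 \<le> length ys" "last xs = hd ys"
  shows "min (chain_min x0 xs) (chain_min x0 ys) \<le> chain_min x0 (xs @ tl ys)"
proof (rule chain_min_greatest)
  show "2 \<le> length (xs @ tl ys)" using assms by simp
  define zs where "zs = xs @ tl ys"
  have "xs \<noteq> []" "ys \<noteq> []" using assms(1,2) by auto
  have shift: "zs ! k = ys ! (k + 1 - length xs)" if "length xs - 1 \<le> k" "k < length zs" for k
  proof (cases "k < length xs")
    case True
    then have "k = length xs - 1" using that by auto
    then have "zs ! k = last xs" using \<open>xs \<noteq> []\<close> by (simp add: zs_def nth_append last_conv_nth)
    also have "\<dots> = ys ! 0" using assms(3) \<open>ys \<noteq> []\<close> by (simp add: hd_conv_nth)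
    finally show ?thesis using \<open>k = length xs - 1\<close> assms by simp
  next
    case False
    then show ?thesis using that assms by (simp add: zs_def nth_append nth_tl Suc_diff_le)
  qed
  fix i assume i: "Suc i < length (xs @ tl ys)"
  show "min (chain_min x0 xs) (chain_min x0 ys) \<le> gromov x0 ((xs @ tl ys) ! i) ((xs @ tl ys) ! Suc i)"
  proof (cases "Suc i < length xs")
    case True
    then show ?thesis using chain_min_le[OF True, of x0] by (simp add: nth_append)
  next
    case False
    have "zs ! i = ys ! (i + 1 - length xs)" "zs ! Suc i = ys ! Suc (i + 1 - length xs)"
      using shift[of i] shift[of "Suc i"] False i by (auto simp: zs_def Suc_diff_le)
    moreover have "Suc (i + 1 - length xs) < length ys" using i False assms by auto
    ultimately show ?thesis using chain_min_le[of _ ys x0] by (fastforce simp: zs_def)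
  qed
qed

lemma append_tl_in_chains:
  assumes "xs \<in> chains X x y" "ys \<in> chains X y z"
  shows "xs @ tl ys \<in> chains X x z"
  using assms unfolding chains_def by (cases xs; cases ys) (auto simp: list.set_sel)

lemma pair_in_chains: "x \<in> X \<Longrightarrow> y \<in> X \<Longrightarrow> [x, y] \<in> chains X x y"
  by (auto simp: chains_def)

text \<open>The path concatenates geodesics between consecutive points of the chain.\<close>
lemma path_along_chain:
  assumes "geodesic_space X" "2 \<le> length xs" "set xs \<subseteq> X"
    and "\<And>i. Suc i < length xs \<Longrightarrow> m \<le> gromov x0 (xs ! i) (xs ! Suc i)"
  obtains g where "path g" "path_image g \<subseteq> X" "pathstart g = hd xs" "pathfinish g = last xs"
    "\<forall>p\<in>path_image g. m \<le> dist x0 p"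
  using assms(2-)
proof (induction xs arbitrary: thesis rule: induct_list012)
  case (3 a b rest)
  have "a \<in> X" "b \<in> X" using "3.prems"(3) by auto
  then obtain S where S: "geodesic_seg X a b S"
    using assms(1) unfolding geodesic_space_def by blast
  obtain g1 where g1: "path g1" "path_image g1 = S" "pathstart g1 = a" "pathfinish g1 = b"
    using S by (rule geodesic_seg_path)
  have far_S: "m \<le> dist x0 p" if "p \<in> S" for p
    using "3.prems"(4)[of 0] gromov_le_dist_geodesic_seg[OF S that, of x0] by simp
  show ?case
  proof (cases rest)
    case Nil
    then show ?thesis
      using "3.prems"(1) g1 far_S geodesic_seg_subset[OF S] by auto
  next
    case (Cons c r)
    have "2 \<le> length (b # rest)" "set (b # rest) \<subseteq> X" using Cons "3.prems"(3) by auto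
    moreover have "m \<le> gromov x0 ((b # rest) ! i) ((b # rest) ! Suc i)"
      if "Suc i < length (b # rest)" for i
      using "3.prems"(4)[of "Suc i"] that by simp
    ultimately obtain g2 where g2: "path g2" "path_image g2 \<subseteq> X" "pathstart g2 = b"
      "pathfinish g2 = last (b # rest)" "\<forall>p\<in>path_image g2. m \<le> dist x0 p"
      using "3.IH"(2) by (metis list.sel(1))
    have "path_image (g1 +++ g2) = S \<union> path_image g2"
      using path_image_join g1 g2 by metis
    then show ?thesis
      using g1 g2 far_S geodesic_seg_subset[OF S] Cons by (intro "3.prems"(1)[of "g1 +++ g2"]) auto
  qed
qed auto

lemma chain_gromov_eq_Sup: "chain_gromov X x0 x y = Sup (chain_min x0 ` chains X x y)"
  unfolding chain_gromov_def chain_min_def chains_def by (rule arg_cong[where f = Sup]) auto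

lemma bdd_above_chain_min: "bdd_above (chain_min x0 ` chains X x y)"
  by (rule bdd_aboveI[of _ "dist x0 x"]) (auto simp: chains_def intro!: chain_min_le_dist_hd)

lemma chain_min_le_chain_gromov: "xs \<in> chains X x y \<Longrightarrow> chain_min x0 xs \<le> chain_gromov X x0 x y"
  unfolding chain_gromov_eq_Sup by (rule cSup_upper[OF imageI bdd_above_chain_min])

lemma chain_gromov_least:
  assumes "x \<in> X" "y \<in> X" "\<And>xs. xs \<in> chains X x y \<Longrightarrow> chain_min x0 xs \<le> c"
  shows "chain_gromov X x0 x y \<le> c"
  unfolding chain_gromov_eq_Sup using pair_in_chains[OF assms(1,2)] assms(3) by (auto intro!: cSup_least)

lemma gromov_le_chain_gromov: "x \<in> X \<Longrightarrow> y \<in> X \<Longrightarrow> gromov x0 x y \<le> chain_gromov X x0 x y"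
  using chain_min_le_chain_gromov[OF pair_in_chains] by (simp add: chain_min_pair)

lemma chain_gromov_le_dist:
  assumes "x \<in> X" "y \<in> X"
  shows "chain_gromov X x0 x y \<le> dist x0 x" "chain_gromov X x0 x y \<le> dist x0 y"
  using assms by (auto intro!: chain_gromov_least chain_min_le_dist_hd chain_min_le_dist_last
      simp: chains_def)

lemma chain_gromov_commute:
  assumes "x \<in> X" "y \<in> X"
  shows "chain_gromov X x0 x y = chain_gromov X x0 y x"
proof -
  have "chain_gromov X x0 x y \<le> chain_gromov X x0 y x" if "x \<in> X" "y \<in> X" for x y
  proof (rule chain_gromov_least[OF that])
    fix xs assume "xs \<in> chains X x y"
    then have "rev xs \<in> chains X y x" "chain_min x0 xs = chain_min x0 (rev xs)"
      by (auto simp: chains_def hd_rev last_rev chain_min_rev)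
    then show "chain_min x0 xs \<le> chain_gromov X x0 y x"
      by (metis chain_min_le_chain_gromov)
  qed
  with assms show ?thesis by (meson antisym)
qed

lemma chain_gromov_ultrametric:
  assumes "x \<in> X" "y \<in> X" "z \<in> X"
  shows "min (chain_gromov X x0 x y) (chain_gromov X x0 y z) \<le> chain_gromov X x0 x z"
proof (rule field_le_epsilon)
  fix e :: real assume e: "0 < e"
  let ?m = "min (chain_gromov X x0 x y) (chain_gromov X x0 y z)"
  have "?m - e < Sup (chain_min x0 ` chains X x y)" using e chain_gromov_eq_Sup[of X x0 x y] by simp
  then obtain xs where xs: "xs \<in> chains X x y" "?m - e < chain_min x0 xs"
    using less_cSupD[of "chain_min x0 ` chains X x y"] pair_in_chains[OF assms(1,2)] by blast
  have "?m - e < Sup (chain_min x0 ` chains X y z)" using e chain_gromov_eq_Sup[of X x0 y z] by simp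
  then obtain ys where ys: "ys \<in> chains X y z" "?m - e < chain_min x0 ys"
    using less_cSupD[of "chain_min x0 ` chains X y z"] pair_in_chains[OF assms(2,3)] by blast
  have "min (chain_min x0 xs) (chain_min x0 ys) \<le> chain_min x0 (xs @ tl ys)"
    using xs(1) ys(1) by (intro chain_min_append) (auto simp: chains_def)
  also have "\<dots> \<le> chain_gromov X x0 x z"
    by (rule chain_min_le_chain_gromov[OF append_tl_in_chains[OF xs(1) ys(1)]])
  finally show "?m \<le> chain_gromov X x0 x z + e" using xs ys by linarith
qed

lemma chain_min_le_gromov_bottleneck:
  assumes geo: "geodesic_space X" and bn: "bottleneck X \<Delta>" and hyp: "hyperbolic X \<delta>"
    and "x0 \<in> X" and xs: "xs \<in> chains X x y"
  shows "chain_min x0 xs \<le> gromov x0 x y + \<Delta> + 2 * \<delta>"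
proof -
  have l: "2 \<le> length xs" "set xs \<subseteq> X" "hd xs = x" "last xs = y"
    using xs by (auto simp: chains_def)
  moreover have "xs \<noteq> []" using l(1) by auto
  ultimately have "x \<in> X" "y \<in> X" by (metis hd_in_set last_in_set subsetD)+
  then obtain S B C where S: "geodesic_seg X x y S" and B: "geodesic_seg X y x0 B"
    and C: "geodesic_seg X x0 x C"
    using geo \<open>x0 \<in> X\<close> unfolding geodesic_space_def by blast
  have "\<forall>p\<in>S. infdist p (B \<union> C) \<le> \<delta>"
    using hyp S B C unfolding hyperbolic_def by blast
  then obtain z where z: "z \<in> S" "dist x0 z \<le> gromov x0 x y + 2 * \<delta>"
    by (rule slim_triangle_point_near_basepoint[OF S B C])
  obtain g where g: "path g" "path_image g \<subseteq> X" "pathstart g = x" "pathfinish g = y"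
    "\<forall>p\<in>path_image g. chain_min x0 xs \<le> dist x0 p"
    using path_along_chain[OF geo l(1,2) chain_min_le] l(3,4) by blast
  have "path_image g \<inter> cball z \<Delta> \<noteq> {}"
    using bn S z(1) g(1-4) unfolding bottleneck_def by blast
  then obtain q where q: "q \<in> path_image g" "dist z q \<le> \<Delta>" by auto
  have "chain_min x0 xs \<le> dist x0 q" using g(5) q(1) by blast
  also have "\<dots> \<le> dist x0 z + dist z q" by (rule dist_triangle)
  finally show ?thesis using z(2) q(2) by linarith
qed

lemma chain_gromov_le_gromov:
  assumes "geodesic_space X" "bottleneck X \<Delta>" "hyperbolic X \<delta>" "x0 \<in> X" "x \<in> X" "y \<in> X"
  shows "chain_gromov X x0 x y \<le> gromov x0 x y + \<Delta> + 2 * \<delta>"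
  using assms by (intro chain_gromov_least chain_min_le_gromov_bottleneck)

lemma end_rel_iff:
  "(x, x') \<in> end_rel X x0 \<longleftrightarrow>
     x \<in> X \<and> x' \<in> X \<and> chain_gromov X x0 x x' = dist x0 x \<and> chain_gromov X x0 x x' = dist x0 x'"
  using chain_gromov_le_dist[of x X x' x0] unfolding end_rel_def dprime_def by auto

lemma end_rel_sym: "(x, x') \<in> end_rel X x0 \<Longrightarrow> (x', x) \<in> end_rel X x0"
  by (simp add: end_rel_iff chain_gromov_commute)

lemma chain_gromov_mono_end_rel:
  assumes x: "(x, x') \<in> end_rel X x0" and y: "(y, y') \<in> end_rel X x0"
  shows "chain_gromov X x0 x y \<le> chain_gromov X x0 x' y'"
proof -
  have X: "x \<in> X" "x' \<in> X" "y \<in> X" "y' \<in> X" using x y by (auto simp: end_rel_iff)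
  have "chain_gromov X x0 x y \<le> min (chain_gromov X x0 x y) (chain_gromov X x0 y y')"
    using chain_gromov_le_dist[OF X(1,3)] y by (simp add: end_rel_iff)
  also have "\<dots> \<le> chain_gromov X x0 x y'"
    by (rule chain_gromov_ultrametric[OF X(1,3,4)])
  finally have "chain_gromov X x0 x y \<le> min (chain_gromov X x0 x' x) (chain_gromov X x0 x y')"
    using chain_gromov_le_dist[OF X(1,3)] x X chain_gromov_commute[of x X x' x0]
    by (simp add: end_rel_iff)
  also have "\<dots> \<le> chain_gromov X x0 x' y'"
    by (rule chain_gromov_ultrametric[OF X(2,1,4)])
  finally show ?thesis .
qed

lemma dprime_end_rel_cong:
  assumes x: "(x, x') \<in> end_rel X x0" and y: "(y, y') \<in> end_rel X x0"
  shows "dprime X x0 x' y' = dprime X x0 x y"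
proof -
  have "chain_gromov X x0 x' y' = chain_gromov X x0 x y"
    using chain_gromov_mono_end_rel[OF x y] chain_gromov_mono_end_rel[OF end_rel_sym[OF x] end_rel_sym[OF y]]
    by simp
  moreover have "dist x0 x' = dist x0 x" "dist x0 y' = dist x0 y"
    using x y by (auto simp: end_rel_iff)
  ultimately show ?thesis unfolding dprime_def by simp
qed

lemma self_in_end_map: "x \<in> X \<Longrightarrow> x \<in> end_map X x0 x"
  using gromov_le_chain_gromov[of x X x x0] chain_gromov_le_dist[of x X x x0]
  by (auto simp: end_map_def end_rel_iff gromov_def)

lemma dstar_end_map:
  assumes "x \<in> X" "y \<in> X"
  shows "dstar X x0 (end_map X x0 x) (end_map X x0 y) = dprime X x0 x y"
proof -
  have "(SOME x'. x' \<in> end_map X x0 x) \<in> end_map X x0 x"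
    "(SOME y'. y' \<in> end_map X x0 y) \<in> end_map X x0 y"
    using assms self_in_end_map by (metis someI)+
  then show ?thesis
    unfolding dstar_def by (intro dprime_end_rel_cong) (auto simp: end_map_def)
qed

theorem proposition4p2:
  fixes X :: "'a::metric_space set" and x0 :: 'a and \<Delta> \<delta> :: real
  assumes "geodesic_space X"
    and "quasi_tree X"
    and "bottleneck X \<Delta>"
    and "hyperbolic X \<delta>"
    and "x0 \<in> X"
  shows "end_map X x0 ` X = TX X x0 \<and>
         (\<forall>x\<in>X. \<forall>y\<in>X.
            dist x y - 2 * (\<Delta> + 2 * \<delta>) \<le> dstar X x0 (end_map X x0 x) (end_map X x0 y) \<and>
            dstar X x0 (end_map X x0 x) (end_map X x0 y) \<le> dist x y)"
proof (intro conjI ballI)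
  show "end_map X x0 ` X = TX X x0"
    by (auto simp: TX_def quotient_def end_map_def)
next
  fix x y assume "x \<in> X" "y \<in> X"
  then have d: "dstar X x0 (end_map X x0 x) (end_map X x0 y) = dprime X x0 x y"
    and "gromov x0 x y \<le> chain_gromov X x0 x y"
    and "chain_gromov X x0 x y \<le> gromov x0 x y + \<Delta> + 2 * \<delta>"
    using assms by (simp_all add: dstar_end_map gromov_le_chain_gromov chain_gromov_le_gromov)
  then show "dist x y - 2 * (\<Delta> + 2 * \<delta>) \<le> dstar X x0 (end_map X x0 x) (end_map X x0 y)"
    and "dstar X x0 (end_map X x0 x) (end_map X x0 y) \<le> dist x y"
    unfolding d dprime_def gromov_def by (simp_all add: field_simps)
qed

end
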